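(* A $\tau$-equivariant polynomial automorphism of $\mathcal{D}$ extends uniquely to a polynomial automorphism of $\mathcal{M}(2;\mathbb{C})$ compatible with conjugation.
   Context: $\mathcal{D}$ is the set of diagonal $2\times2$ complex matrices, identified with $\mathbb{C}^2$ via $\mathrm{diag}(\lambda_1,\lambda_2)\mapsto(\lambda_1,\lambda_2)$; $\tau(\lambda_1,\lambda_2)=(\lambda_2,\lambda_1)$, and $\tau$-equivariant means commuting with $\tau$. A map $\Phi$ of $\mathcal{M}(2;\mathbb{C})$ is compatible with conjugation if $\mathrm{A}\Phi(\mathrm{M})\mathrm{A}^{-1}=\Phi(\mathrm{A}\mathrm{M}\mathrm{A}^{-1})$ for all $\mathrm{A}\in\mathrm{GL}(2;\mathbb{C})$; the extension restricts to the given automorphism on $\mathcal{D}$. *)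

theory Defs
  imports "HOL-Analysis.Analysis"
begin

inductive_set vec_polyfun :: "(complex^'n \<Rightarrow> complex) set" where
  const: "(\<lambda>x. c) \<in> vec_polyfun"
| coord: "(\<lambda>x. x $ i) \<in> vec_polyfun"
| add: "f \<in> vec_polyfun \<Longrightarrow> g \<in> vec_polyfun \<Longrightarrow> (\<lambda>x. f x + g x) \<in> vec_polyfun"
| mult: "f \<in> vec_polyfun \<Longrightarrow> g \<in> vec_polyfun \<Longrightarrow> (\<lambda>x. f x * g x) \<in> vec_polyfun"

inductive_set mat_polyfun :: "(complex^'n^'m \<Rightarrow> complex) set" where
  const: "(\<lambda>M. c) \<in> mat_polyfun"
| coord: "(\<lambda>M. M $ i $ j) \<in> mat_polyfun"
| add: "f \<in> mat_polyfun \<Longrightarrow> g \<in> mat_polyfun \<Longrightarrow> (\<lambda>M. f M + g M) \<in> mat_polyfun"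
| mult: "f \<in> mat_polyfun \<Longrightarrow> g \<in> mat_polyfun \<Longrightarrow> (\<lambda>M. f M * g M) \<in> mat_polyfun"

definition vec_polymap :: "(complex^'n \<Rightarrow> complex^'m) \<Rightarrow> bool" where
  "vec_polymap F \<longleftrightarrow> (\<forall>j. (\<lambda>x. F x $ j) \<in> vec_polyfun)"

definition mat_polymap :: "(complex^'n^'m \<Rightarrow> complex^'n^'m) \<Rightarrow> bool" where
  "mat_polymap F \<longleftrightarrow> (\<forall>i j. (\<lambda>M. F M $ i $ j) \<in> mat_polyfun)"

definition vec_polyaut :: "(complex^'n \<Rightarrow> complex^'n) \<Rightarrow> bool" where
  "vec_polyaut F \<longleftrightarrow> bij F \<and> vec_polymap F \<and> vec_polymap (inv F)"

definition mat_polyaut :: "(complex^'n^'m \<Rightarrow> complex^'n^'m) \<Rightarrow> bool" where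
  "mat_polyaut F \<longleftrightarrow> bij F \<and> mat_polymap F \<and> mat_polymap (inv F)"

text \<open>Identification C^2 = D: (l1,l2) maps to diag(l1,l2).\<close>
definition diag2 :: "complex^2 \<Rightarrow> complex^2^2" where
  "diag2 v = (\<chi> i j. if i = j then v $ i else 0)"

definition tau :: "complex^2 \<Rightarrow> complex^2" where
  "tau v = (\<chi> i. if i = 1 then v $ 2 else v $ 1)"

end

theory Submission
  imports Defs
begin

text \<open>A polynomial \<open>f\<close> on \<open>\<complex>\<^sup>2\<close> yields a conjugation-compatible polynomial map of matrices by
replacing the coordinates \<open>\<lambda>\<^sub>1, \<lambda>\<^sub>2\<close> by \<open>M\<close> and its adjugate \<open>tr(M) I - M\<close>, constants by scalar
matrices, and sums and products by matrix sums and products; on \<open>diag(\<lambda>\<^sub>1, \<lambda>\<^sub>2)\<close> it takes the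
value \<open>diag(f(\<lambda>), f(\<tau> \<lambda>))\<close>. Applied to the first component of a \<open>\<tau>\<close>-equivariant \<open>\<phi>\<close>, this
extends \<open>\<phi>\<close>. Conversely, a conjugation-compatible map is determined by its values on upper
triangular matrices, since every complex \<open>2\<times>2\<close> matrix is triangularizable; those with distinct
eigenvalues are diagonalizable and the others are limits of them, so a continuous such map is
determined by its values on diagonal matrices. By this uniqueness, the extensions of \<open>\<phi>\<close> and
\<open>\<phi>\<^sup>-\<^sup>1\<close> are mutually inverse.\<close>

lemma matrix_inv_right:
  "invertible A \<Longrightarrow> A ** matrix_inv A = mat 1"
  and matrix_inv_left:
  "invertible A \<Longrightarrow> matrix_inv A ** A = mat 1"
  unfolding invertible_def matrix_inv_def by (metis (mono_tags, lifting) someI_ex)+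

lemma matrix_add_rdistrib: "(B + C) ** (A :: 'a::semiring_1^_^_) = B ** A + C ** A"
  by (vector matrix_matrix_mult_def sum.distrib[symmetric] field_simps)

lemma matrix_diff_ldistrib: "(A :: 'a::ring_1^_^_) ** (B - C) = A ** B - A ** C"
  by (vector matrix_matrix_mult_def sum_subtractf[symmetric] field_simps)

lemma matrix_diff_rdistrib: "(B - C) ** (A :: 'a::ring_1^_^_) = B ** A - C ** A"
  by (vector matrix_matrix_mult_def sum_subtractf[symmetric] field_simps)

lemma mat_commute: "(A :: 'a::comm_semiring_1^'n^'n) ** mat c = mat c ** A"
  by (simp add: vec_eq_iff matrix_matrix_mult_def mat_def if_distrib if_distribR mult.commute cong: if_cong)

lemma similar_intertwining:
  assumes "invertible P" "M ** P = P ** T"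
  shows "M = P ** T ** matrix_inv P"
  by (metis assms matrix_inv_right matrix_mul_assoc matrix_mul_rid)

lemma continuous_on_eq_off_point:
  fixes f g :: "real \<Rightarrow> 'b::t2_space"
  assumes "continuous_on UNIV f" "continuous_on UNIV g" "\<And>t. t \<noteq> a \<Longrightarrow> f t = g t"
  shows "f a = g a"
proof (rule tendsto_unique[OF trivial_limit_at])
  show "(f \<longlongrightarrow> f a) (at a)" using assms(1) by (simp add: continuous_on_def)
  have "(g \<longlongrightarrow> g a) (at a)" using assms(2) by (simp add: continuous_on_def)
  then show "(f \<longlongrightarrow> g a) (at a)"
    by (rule tendsto_cong[THEN iffD1, rotated]) (auto simp: eventually_at_filter assms(3))
qed

definition conj_compatible :: "('a::field^'n^'n \<Rightarrow> 'a^'n^'n) \<Rightarrow> bool" where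
  "conj_compatible F \<longleftrightarrow>
     (\<forall>A M. invertible A \<longrightarrow> A ** F M ** matrix_inv A = F (A ** M ** matrix_inv A))"

lemma conj_compatible_id: "conj_compatible (\<lambda>M. M)"
  by (simp add: conj_compatible_def)

lemma conj_compatible_comp:
  "conj_compatible F \<Longrightarrow> conj_compatible G \<Longrightarrow> conj_compatible (\<lambda>M. G (F M))"
  unfolding conj_compatible_def by metis

lemma conj_compatible_scalar:
  fixes f :: "'a::field^'n^'n \<Rightarrow> 'a"
  assumes "\<And>A M. invertible A \<Longrightarrow> f (A ** M ** matrix_inv A) = f M"
  shows "conj_compatible (\<lambda>M. mat (f M))"
  unfolding conj_compatible_def
proof (intro allI impI)
  fix A M :: "'a^'n^'n"
  assume "invertible A"
  then have "A ** mat (f M) ** matrix_inv A = mat (f M)"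
    by (metis mat_commute matrix_inv_right matrix_mul_assoc matrix_mul_rid)
  then show "A ** mat (f M) ** matrix_inv A = mat (f (A ** M ** matrix_inv A))"
    using assms \<open>invertible A\<close> by simp
qed

lemma conj_compatible_add:
  "conj_compatible F \<Longrightarrow> conj_compatible G \<Longrightarrow> conj_compatible (\<lambda>M. F M + G M)"
  by (simp add: conj_compatible_def matrix_add_ldistrib matrix_add_rdistrib)

lemma conj_compatible_diff:
  "conj_compatible F \<Longrightarrow> conj_compatible G \<Longrightarrow> conj_compatible (\<lambda>M. F M - G M)"
  by (simp add: conj_compatible_def matrix_diff_ldistrib matrix_diff_rdistrib)

lemma conj_compatible_mult:
  fixes F G :: "'a::field^'n^'n \<Rightarrow> 'a^'n^'n"
  assumes "conj_compatible F" "conj_compatible G"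
  shows "conj_compatible (\<lambda>M. F M ** G M)"
  unfolding conj_compatible_def
proof (intro allI impI)
  fix A M :: "'a^'n^'n"
  assume A: "invertible A"
  have "A ** (F M ** G M) ** matrix_inv A
      = (A ** F M ** matrix_inv A) ** (A ** G M ** matrix_inv A)"
    by (simp add: matrix_mul_assoc)
       (simp add: matrix_inv_left[OF A] flip: matrix_mul_assoc)
  then show "A ** (F M ** G M) ** matrix_inv A
      = F (A ** M ** matrix_inv A) ** G (A ** M ** matrix_inv A)"
    using assms A by (simp add: conj_compatible_def)
qed

lemma trace_conj:
  "invertible A \<Longrightarrow> trace (A ** M ** matrix_inv A) = trace (M :: 'a::field^'n^'n)"
  by (metis trace_mul_sym matrix_mul_assoc matrix_inv_left matrix_mul_lid)

lemma conj_compatible_conj: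
  "conj_compatible F \<Longrightarrow> invertible P \<Longrightarrow> F (P ** T ** matrix_inv P) = P ** F T ** matrix_inv P"
  by (simp add: conj_compatible_def)

lemma mat_polyfun_diff:
  "f \<in> mat_polyfun \<Longrightarrow> g \<in> mat_polyfun \<Longrightarrow> (\<lambda>M. f M - g M) \<in> mat_polyfun"
  using mat_polyfun.add[OF _ mat_polyfun.mult[OF mat_polyfun.const[of "-1"]]] by simp

lemma mat_polyfun_sum:
  assumes "finite S" "\<And>k. k \<in> S \<Longrightarrow> f k \<in> mat_polyfun"
  shows "(\<lambda>M. \<Sum>k\<in>S. f k M) \<in> mat_polyfun"
  using assms by (induction S rule: finite_induct) (auto intro: mat_polyfun.intros)

lemma mat_polyfun_trace: "trace \<in> mat_polyfun"
  unfolding trace_def by (intro mat_polyfun_sum mat_polyfun.coord finite)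

lemma mat_polyfun_compose:
  "g \<in> mat_polyfun \<Longrightarrow> mat_polymap F \<Longrightarrow> (\<lambda>M. g (F M)) \<in> mat_polyfun"
  by (induction rule: mat_polyfun.induct)
     (auto simp: mat_polymap_def intro: mat_polyfun.intros)

lemma mat_polyfun_continuous: "f \<in> mat_polyfun \<Longrightarrow> continuous_on UNIV f"
  by (induction rule: mat_polyfun.induct) (auto intro!: continuous_intros)

lemma mat_polymap_id: "mat_polymap (\<lambda>M. M)"
  by (simp add: mat_polymap_def mat_polyfun.coord)

lemma mat_polymap_comp:
  assumes "mat_polymap F" "mat_polymap G"
  shows "mat_polymap (\<lambda>M. G (F M))"
  unfolding mat_polymap_def
proof (intro allI)
  fix i j
  have "(\<lambda>M. G M $ i $ j) \<in> mat_polyfun"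
    using assms(2) by (simp add: mat_polymap_def)
  from mat_polyfun_compose[OF this assms(1)] show "(\<lambda>M. G (F M) $ i $ j) \<in> mat_polyfun" .
qed

lemma mat_polymap_add:
  "mat_polymap F \<Longrightarrow> mat_polymap G \<Longrightarrow> mat_polymap (\<lambda>M. F M + G M)"
  by (simp add: mat_polymap_def mat_polyfun.add)

lemma mat_polymap_diff:
  "mat_polymap F \<Longrightarrow> mat_polymap G \<Longrightarrow> mat_polymap (\<lambda>M. F M - G M)"
  by (simp add: mat_polymap_def mat_polyfun_diff)

lemma mat_polymap_mult:
  fixes F G :: "complex^'n^'n \<Rightarrow> complex^'n^'n"
  shows "mat_polymap F \<Longrightarrow> mat_polymap G \<Longrightarrow> mat_polymap (\<lambda>M. F M ** G M)"
  by (auto simp: mat_polymap_def matrix_matrix_mult_def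
           intro!: mat_polyfun_sum mat_polyfun.mult)

lemma mat_polymap_scalar:
  assumes "f \<in> mat_polyfun"
  shows "mat_polymap (\<lambda>M. mat (f M))"
  unfolding mat_polymap_def
proof (intro allI)
  fix i j
  show "(\<lambda>M. mat (f M) $ i $ j) \<in> mat_polyfun"
    by (cases "i = j") (simp_all add: mat_def assms mat_polyfun.const)
qed

lemma mat_polymap_continuous:
  assumes "mat_polymap F"
  shows "continuous_on UNIV F"
proof -
  have "continuous_on UNIV (\<lambda>M. \<chi> i j. F M $ i $ j)"
    using assms unfolding mat_polymap_def
    by (intro continuous_on_vec_lambda mat_polyfun_continuous) simp
  then show ?thesis by simp
qed

definition mat2 :: "'a \<Rightarrow> 'a \<Rightarrow> 'a \<Rightarrow> 'a \<Rightarrow> 'a^2^2" where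
  "mat2 a b c d = (\<chi> i j. if i = 1 then (if j = 1 then a else b) else (if j = 1 then c else d))"

lemma mat2_nth [simp]:
  "mat2 a b c d $ 1 $ 1 = a" "mat2 a b c d $ 1 $ 2 = b"
  "mat2 a b c d $ 2 $ 1 = c" "mat2 a b c d $ 2 $ 2 = d"
  by (simp_all add: mat2_def)

lemma mat2_eta: "M = mat2 (M$1$1) (M$1$2) (M$2$1) (M$2$2)"
  by (simp add: vec_eq_iff forall_2)

lemma mat2_eq_iff [simp]: "mat2 a b c d = mat2 a' b' c' d' \<longleftrightarrow> a = a' \<and> b = b' \<and> c = c' \<and> d = d'"
  by (metis mat2_nth)

lemma mat2_mult [simp]:
  "mat2 a b c d ** mat2 a' b' c' d' = mat2 (a*a' + b*c') (a*b' + b*d') (c*a' + d*c') (c*b' + d*d')"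
  by (simp add: vec_eq_iff forall_2 matrix_matrix_mult_def sum_2)

lemma mat2_add [simp]:
  "mat2 a b c d + mat2 a' b' c' d' = mat2 (a + a') (b + b') (c + c') (d + d')"
  by (simp add: vec_eq_iff forall_2)

lemma continuous_on_mat2 [continuous_intros]:
  assumes "continuous_on S a" "continuous_on S b" "continuous_on S c" "continuous_on S d"
  shows "continuous_on S (\<lambda>t. mat2 (a t) (b t) (c t) (d t))"
  unfolding mat2_def
proof (intro continuous_on_vec_lambda)
  fix i j :: 2
  show "continuous_on S (\<lambda>t. if i = 1 then if j = 1 then a t else b t else if j = 1 then c t else d t)"
    by (cases "i = 1"; cases "j = 1") (simp_all add: assms)
qed

lemma mat_eq_mat2: "mat k = mat2 k 0 0 k"
  by (simp add: vec_eq_iff forall_2 mat_def)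

lemma det_mat2 [simp]: "det (mat2 a b c d) = a*d - b*c"
  by (simp add: det_2)

lemma diag2_eq_mat2: "diag2 v = mat2 (v$1) 0 0 (v$2)"
  by (simp add: vec_eq_iff forall_2 diag2_def)

lemma tau_nth [simp]: "tau v $ 1 = v $ 2" "tau v $ 2 = v $ 1"
  by (simp_all add: tau_def)

lemma complex_quadratic_root: "\<exists>l::complex. l^2 + b*l + c = 0"
proof
  define w where "w = csqrt (b^2 - 4*c)"
  have "w^2 = b^2 - 4*c" unfolding w_def by (rule power2_csqrt)
  have "((w - b)/2)^2 + b*((w - b)/2) + c = (w^2 - (b^2 - 4*c)) / 4"
    by (simp add: field_simps power2_eq_square)
  also have "\<dots> = 0" using \<open>w^2 = b^2 - 4*c\<close> by simp
  finally show "((w - b)/2)^2 + b*((w - b)/2) + c = 0" .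
qed

lemma mat2_upper_triangular_similar_diagonal:
  fixes x y :: "'a::field"
  assumes "x \<noteq> y"
  shows "\<exists>P. invertible P \<and> mat2 x b 0 y = P ** mat2 x 0 0 y ** matrix_inv P"
proof (intro exI conjI)
  let ?P = "mat2 1 b 0 (y - x)"
  show "invertible ?P" using assms by (simp add: invertible_det_nz)
  show "mat2 x b 0 y = ?P ** mat2 x 0 0 y ** matrix_inv ?P"
    by (rule similar_intertwining[OF \<open>invertible ?P\<close>]) (simp add: algebra_simps)
qed

lemma mat2_similar_upper_triangular:
  "\<exists>P x b y. invertible P \<and> M = P ** mat2 x b 0 y ** matrix_inv (P :: complex^2^2)"
proof (cases "M$2$1 = 0")
  case True
  have "invertible (mat 1 :: complex^2^2)" by (simp add: invertible_det_nz)
  moreover have "M ** mat 1 = mat 1 ** mat2 (M$1$1) (M$1$2) 0 (M$2$2)"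
    using True mat2_eta[of M] by (metis matrix_mul_lid matrix_mul_rid)
  ultimately show ?thesis by (blast intro: similar_intertwining)
next
  case False
  define a b c d where "a = M$1$1" "b = M$1$2" "c = M$2$1" "d = M$2$2"
  obtain l where l: "l^2 + -(a + d)*l + (a*d - b*c) = 0"
    using complex_quadratic_root by blast
  \<comment> \<open>\<open>(l - d, c)\<close> is an eigenvector of \<open>M\<close> for the eigenvalue \<open>l\<close>\<close>
  let ?P = "mat2 (l - d) 1 c 0"
  have "invertible ?P" using False by (simp add: invertible_det_nz a_b_c_d_def)
  moreover have "M ** ?P = ?P ** mat2 l 1 0 (a + d - l)"
    using l by (subst mat2_eta) (simp add: a_b_c_d_def algebra_simps power2_eq_square)
  ultimately show ?thesis by (blast intro: similar_intertwining)
qed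

lemma polyfun_conj_compatible_extension:
  assumes "f \<in> vec_polyfun"
  shows "\<exists>F. mat_polymap F \<and> conj_compatible F \<and> (\<forall>v. F (diag2 v) = mat2 (f v) 0 0 (f (tau v)))"
  using assms
proof induction
  case (const c)
  have "mat_polymap (\<lambda>M. mat c)" by (rule mat_polymap_scalar[OF mat_polyfun.const])
  moreover have "conj_compatible (\<lambda>M. mat c)" by (rule conj_compatible_scalar) simp
  ultimately show ?case by (auto simp: mat_eq_mat2)
next
  case (coord i)
  consider "i = 1" | "i = 2" using exhaust_2 by blast
  then show ?case
  proof cases
    case 1
    then show ?thesis
      using mat_polymap_id conj_compatible_id by (auto simp: diag2_eq_mat2)
  next
    case 2
    \<comment> \<open>the adjugate \<open>mat (trace M) - M\<close> swaps the two diagonal entries\<close>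
    have "mat_polymap (\<lambda>M. mat (trace M) - M)"
      by (intro mat_polymap_diff mat_polymap_scalar mat_polyfun_trace mat_polymap_id)
    moreover have "conj_compatible (\<lambda>M. mat (trace M) - (M :: complex^2^2))"
      by (intro conj_compatible_diff conj_compatible_scalar conj_compatible_id trace_conj)
    ultimately show ?thesis
      using 2 by (auto simp: diag2_eq_mat2 mat_eq_mat2 trace_def sum_2 vec_eq_iff forall_2)
  qed
next
  case (add f g)
  then obtain F G where
    "mat_polymap F" "conj_compatible F" "\<forall>v. F (diag2 v) = mat2 (f v) 0 0 (f (tau v))"
    "mat_polymap G" "conj_compatible G" "\<forall>v. G (diag2 v) = mat2 (g v) 0 0 (g (tau v))"
    by blast
  then show ?case
    by (intro exI[of _ "\<lambda>M. F M + G M"]) (simp add: mat_polymap_add conj_compatible_add)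
next
  case (mult f g)
  then obtain F G where
    "mat_polymap F" "conj_compatible F" "\<forall>v. F (diag2 v) = mat2 (f v) 0 0 (f (tau v))"
    "mat_polymap G" "conj_compatible G" "\<forall>v. G (diag2 v) = mat2 (g v) 0 0 (g (tau v))"
    by blast
  then show ?case
    by (intro exI[of _ "\<lambda>M. F M ** G M"]) (simp add: mat_polymap_mult conj_compatible_mult)
qed

lemma tau_equivariant_conj_compatible_extension:
  assumes "vec_polymap \<psi>" "\<forall>v. \<psi> (tau v) = tau (\<psi> v)"
  shows "\<exists>\<Psi>. mat_polymap \<Psi> \<and> conj_compatible \<Psi> \<and> (\<forall>v. \<Psi> (diag2 v) = diag2 (\<psi> v))"
proof -
  have "(\<lambda>v. \<psi> v $ 1) \<in> vec_polyfun" using assms(1) by (simp add: vec_polymap_def)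
  with assms(2) show ?thesis
    by (auto simp: diag2_eq_mat2 dest!: polyfun_conj_compatible_extension)
qed

lemma conj_compatible_polymap_eqI:
  fixes F G :: "complex^2^2 \<Rightarrow> complex^2^2"
  assumes F: "mat_polymap F" "conj_compatible F" and G: "mat_polymap G" "conj_compatible G"
    and diag: "\<And>v. F (diag2 v) = G (diag2 v)"
  shows "F = G"
proof -
  have diagonal: "F (mat2 x 0 0 y) = G (mat2 x 0 0 y)" for x y
    using diag[of "\<chi> i. if i = 1 then x else y"] by (simp add: diag2_eq_mat2)
  have distinct: "F (mat2 x b 0 y) = G (mat2 x b 0 y)" if xy: "x \<noteq> y" for x b y
  proof -
    obtain P where "invertible P" and P: "mat2 x b 0 y = P ** mat2 x 0 0 y ** matrix_inv P"
      using mat2_upper_triangular_similar_diagonal[OF xy] by blast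
    have "F (mat2 x b 0 y) = P ** F (mat2 x 0 0 y) ** matrix_inv P"
      unfolding P using conj_compatible_conj[OF F(2) \<open>invertible P\<close>] .
    also have "\<dots> = G (mat2 x b 0 y)"
      unfolding P using conj_compatible_conj[OF G(2) \<open>invertible P\<close>] diagonal by simp
    finally show ?thesis .
  qed
  have repeated_eigenvalue: "F (mat2 x b 0 x) = G (mat2 x b 0 x)" for x b
  proof -
    have path: "continuous_on UNIV (\<lambda>t::real. mat2 (x + of_real t) b 0 x)"
      by (intro continuous_intros)
    have "(\<lambda>t. F (mat2 (x + of_real t) b 0 x)) 0 = (\<lambda>t. G (mat2 (x + of_real t) b 0 x)) 0"
    proof (rule continuous_on_eq_off_point)
      show "continuous_on UNIV (\<lambda>t. F (mat2 (x + of_real t) b 0 x))"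
        by (rule continuous_on_compose2[OF mat_polymap_continuous[OF F(1)] path]) simp
      show "continuous_on UNIV (\<lambda>t. G (mat2 (x + of_real t) b 0 x))"
        by (rule continuous_on_compose2[OF mat_polymap_continuous[OF G(1)] path]) simp
      show "F (mat2 (x + of_real t) b 0 x) = G (mat2 (x + of_real t) b 0 x)" if "t \<noteq> 0" for t
        using that by (intro distinct) simp
    qed
    then show ?thesis by simp
  qed
  have triangular: "F (mat2 x b 0 y) = G (mat2 x b 0 y)" for x b y
    using distinct repeated_eigenvalue by (cases "x = y") auto
  show ?thesis
  proof
    fix M :: "complex^2^2"
    obtain P x b y where "invertible P" "M = P ** mat2 x b 0 y ** matrix_inv P"
      using mat2_similar_upper_triangular[of M] by blast
    then show "F M = G M" using F(2) G(2) triangular by (simp add: conj_compatible_conj)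
  qed
qed

lemma mat_polyaut_if_inverse_polymap:
  assumes "mat_polymap F" "mat_polymap G" "\<And>M. G (F M) = M" "\<And>M. F (G M) = M"
  shows "mat_polyaut F"
proof -
  have "G \<circ> F = id" "F \<circ> G = id"
    using assms(3,4) by (auto simp: fun_eq_iff)
  then have "bij F" and "inv F = G"
    by (simp_all add: o_bij inv_unique_comp)
  with assms(1,2) show ?thesis by (simp add: mat_polyaut_def)
qed

lemma bij_inv_commute:
  assumes "bij f" "\<And>x. f (g x) = g (f x)"
  shows "inv f (g y) = g (inv f y)"
  by (metis assms bij_inv_eq_iff)

theorem corollary2p5:
  fixes \<phi> :: "complex^2 \<Rightarrow> complex^2"
  assumes "vec_polyaut \<phi>"
    and "\<forall>v. \<phi> (tau v) = tau (\<phi> v)"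
  shows "\<exists>!\<Phi> :: complex^2^2 \<Rightarrow> complex^2^2.
           mat_polyaut \<Phi>
         \<and> (\<forall>A M. invertible A \<longrightarrow> A ** \<Phi> M ** matrix_inv A = \<Phi> (A ** M ** matrix_inv A))
         \<and> (\<forall>v. \<Phi> (diag2 v) = diag2 (\<phi> v))"
proof -
  have bij: "bij \<phi>" and "vec_polymap \<phi>" "vec_polymap (inv \<phi>)"
    using assms(1) by (auto simp: vec_polyaut_def)
  obtain \<Phi> where \<Phi>: "mat_polymap \<Phi>" "conj_compatible \<Phi>" "\<forall>v. \<Phi> (diag2 v) = diag2 (\<phi> v)"
    using tau_equivariant_conj_compatible_extension \<open>vec_polymap \<phi>\<close> assms(2) by blast
  have "\<forall>v. inv \<phi> (tau v) = tau (inv \<phi> v)"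
    using bij_inv_commute[OF bij] assms(2) by blast
  then obtain \<Psi> where \<Psi>: "mat_polymap \<Psi>" "conj_compatible \<Psi>" "\<forall>v. \<Psi> (diag2 v) = diag2 (inv \<phi> v)"
    using tau_equivariant_conj_compatible_extension \<open>vec_polymap (inv \<phi>)\<close> by blast
  have "(\<lambda>M. \<Psi> (\<Phi> M)) = (\<lambda>M. M)"
    by (rule conj_compatible_polymap_eqI[OF mat_polymap_comp[OF \<Phi>(1) \<Psi>(1)]
          conj_compatible_comp[OF \<Phi>(2) \<Psi>(2)] mat_polymap_id conj_compatible_id])
       (simp add: \<Phi>(3) \<Psi>(3) bij_is_inj[OF bij])
  moreover have "(\<lambda>M. \<Phi> (\<Psi> M)) = (\<lambda>M. M)"
    by (rule conj_compatible_polymap_eqI[OF mat_polymap_comp[OF \<Psi>(1) \<Phi>(1)]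
          conj_compatible_comp[OF \<Psi>(2) \<Phi>(2)] mat_polymap_id conj_compatible_id])
       (simp add: \<Phi>(3) \<Psi>(3) bij_is_surj[OF bij] surj_f_inv_f)
  ultimately have "mat_polyaut \<Phi>"
    by (intro mat_polyaut_if_inverse_polymap[OF \<Phi>(1) \<Psi>(1)]) meson+
  with \<Phi> show ?thesis
    unfolding conj_compatible_def[symmetric]
    by (metis conj_compatible_polymap_eqI mat_polyaut_def)
qed

end
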